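(* Under the setting of SPPM-LC (see context), assume each $f_\xi$ is differentiable and $\mu$-strongly convex ($\mu>0$), let $x_\star$ be the minimizer of $f=\mathbb{E}_{\xi\sim\mathcal{D}}[f_\xi]$, and suppose the $\sigma_k^2$-assumption holds. Then for every $\gamma>0$ and $k\ge0$, $$\mathbb{E}\|x_{k+1}-x_\star\|^2\le\frac{1+\gamma^2A_1}{(1+\gamma\mu)^2}\mathbb{E}\|x_k-x_\star\|^2+\frac{\gamma^2B_1}{(1+\gamma\mu)^2}\mathbb{E}[\sigma_k^2]+\frac{\gamma^2C_1}{(1+\gamma\mu)^2}.$$
   Context: Notation: $\operatorname{prox}_{\gamma\phi}(y):=\arg\min_{x\in\mathbb{R}^d}\{\phi(x)+\frac{1}{2\gamma}\|x-y\|^2\}$; $\nabla f(x)=\mathbb{E}_{\xi\sim\mathcal{D}}[\nabla f_\xi(x)]$. Algorithm SPPM-LC: parameters $\gamma>0$, $x_0\in\mathbb{R}^d$, $\phi_0\in\mathbb{R}^m$. For $k=0,1,\dots$: sample $\xi_k\sim\mathcal{D}$ independently of the past; form $h_k\in\mathbb{R}^d$ as a function of $x_k,\phi_k,\xi_k$; set $x_{k+1}=\operatorname{prox}_{\gamma f_{\xi_k}}(x_k+\gamma h_k)$; construct a new (possibly random) control vector $\phi_{k+1}\in\mathbb{R}^m$. $\sigma_k^2$-assumption: there exist $\sigma^2:\mathbb{R}^m\to\mathbb{R}_+$ and nonnegative constants $A_1,B_1,C_1,A_2,B_2,C_2$, $B_2<1$, such that with $\sigma_k^2:=\sigma^2(\phi_k)$: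 (i) $\mathbb{E}[h_k\mid x_k,\phi_k]=0$; (ii) $\mathbb{E}[\|h_k-\nabla f_{\xi_k}(x_\star)\|^2\mid x_k,\phi_k]\le A_1\|x_k-x_\star\|^2+B_1\sigma_k^2+C_1$; (iii) $\mathbb{E}[\sigma_{k+1}^2\mid x_{k+1},\phi_k]\le A_2\|x_{k+1}-x_\star\|^2+B_2\sigma_k^2+C_2$. *)

theory Defs
  imports "HOL-Analysis.Analysis" "HOL-Probability.Probability"
begin

definition prox :: "real \<Rightarrow> ('d::euclidean_space \<Rightarrow> real) \<Rightarrow> 'd \<Rightarrow> 'd" where
  "prox \<gamma> \<phi> y = (THE x. \<forall>z. \<phi> x + (norm (x - y))\<^sup>2 / (2 * \<gamma>) \<le> \<phi> z + (norm (z - y))\<^sup>2 / (2 * \<gamma>))"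

definition strongly_convex :: "real \<Rightarrow> ('d::euclidean_space \<Rightarrow> real) \<Rightarrow> bool" where
  "strongly_convex \<mu> f \<longleftrightarrow> convex_on UNIV (\<lambda>x. f x - \<mu> / 2 * (norm x)\<^sup>2)"

definition gen_alg :: "'a measure \<Rightarrow> ('a \<Rightarrow> 'b::topological_space) \<Rightarrow> 'a measure" where
  "gen_alg M X = vimage_algebra (space M) X borel"

definition past_events ::
  "'a measure \<Rightarrow> 'e measure \<Rightarrow> (nat \<Rightarrow> 'a \<Rightarrow> 'd::topological_space) \<Rightarrow> (nat \<Rightarrow> 'a \<Rightarrow> 'm::topological_space)
     \<Rightarrow> (nat \<Rightarrow> 'a \<Rightarrow> 'e) \<Rightarrow> nat \<Rightarrow> 'a set set" where
  "past_events M D x \<phi> \<xi> k = sigma_sets (space M)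
     ((\<Union>j\<le>k. {x j -` A \<inter> space M | A. A \<in> sets borel})
      \<union> (\<Union>j\<le>k. {\<phi> j -` A \<inter> space M | A. A \<in> sets borel})
      \<union> (\<Union>j<k. {\<xi> j -` A \<inter> space M | A. A \<in> sets D}))"

definition var_events :: "'a measure \<Rightarrow> 'e measure \<Rightarrow> ('a \<Rightarrow> 'e) \<Rightarrow> 'a set set" where
  "var_events M D X = {X -` A \<inter> space M | A. A \<in> sets D}"

end

theory Submission
  imports Defs
begin

text \<open>Since \<open>prox\<^sub>\<gamma>\<^sub>f(y) = z\<close> exactly when \<open>y = z + \<gamma>\<nabla>f(z)\<close>, \<open>\<mu>\<close>-strong convexity of \<open>f\<^sub>\<xi>\<close>
  (monotonicity of its gradient) gives the pointwise contraction
  \<open>(1 + \<gamma>\<mu>) \<parallel>x\<^sub>k\<^sub>+\<^sub>1 - x\<^sub>\<star>\<parallel> \<le> \<parallel>(x\<^sub>k - x\<^sub>\<star>) + \<gamma> (h\<^sub>k - \<nabla>f\<^sub>\<xi>\<^sub>k(x\<^sub>\<star>))\<parallel>\<close>.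
  Expanding the square, the cross term has mean zero: \<open>x\<^sub>k - x\<^sub>\<star>\<close> is a function of \<open>(x\<^sub>k, \<phi>\<^sub>k)\<close>,
  given which \<open>h\<^sub>k\<close> has mean zero, while \<open>\<nabla>f\<^sub>\<xi>\<^sub>k(x\<^sub>\<star>)\<close> is independent of \<open>x\<^sub>k\<close> with mean
  \<open>\<nabla>f(x\<^sub>\<star>) = 0\<close>. The second moment of the noise \<open>h\<^sub>k - \<nabla>f\<^sub>\<xi>\<^sub>k(x\<^sub>\<star>)\<close> is then bounded by
  assumption (ii), integrated by the tower property.\<close>

lemma convex_on_has_derivative_ge:
  fixes g :: "'d::real_inner \<Rightarrow> real"
  assumes cv: "convex_on UNIV g" and dg: "(g has_derivative (\<lambda>v. d \<bullet> v)) (at x)"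
  shows "g x + d \<bullet> (y - x) \<le> g y"
proof -
  define l where "l t = g (x + t *\<^sub>R (y - x))" for t :: real
  have "convex_on UNIV l"
  proof (rule convex_onI)
    fix t a b :: real assume t: "t > 0" "t < 1"
    have "x + ((1 - t) *\<^sub>R a + t *\<^sub>R b) *\<^sub>R (y - x)
        = (1 - t) *\<^sub>R (x + a *\<^sub>R (y - x)) + t *\<^sub>R (x + b *\<^sub>R (y - x))"
      by (simp add: algebra_simps)
    then show "l ((1 - t) *\<^sub>R a + t *\<^sub>R b) \<le> (1 - t) * l a + t * l b"
      unfolding l_def using convex_onD[OF cv, of t] t by auto
  qed simp
  moreover have "(l has_field_derivative (d \<bullet> (y - x))) (at 0)"
  proof -
    have "((\<lambda>t::real. x + t *\<^sub>R (y - x)) has_derivative (\<lambda>t. t *\<^sub>R (y - x))) (at 0)"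
      by (intro derivative_eq_intros) auto
    from has_derivative_compose[OF this, of g "\<lambda>v. d \<bullet> v"] dg
    have "(l has_derivative (\<lambda>t. d \<bullet> (t *\<^sub>R (y - x)))) (at 0)"
      unfolding l_def by simp
    moreover have "(\<lambda>t. d \<bullet> (t *\<^sub>R (y - x))) = (*) (d \<bullet> (y - x))"
      by (auto simp: fun_eq_iff)
    ultimately show ?thesis
      unfolding has_field_derivative_def by simp
  qed
  ultimately have "d \<bullet> (y - x) \<le> l 1 - l 0"
    using convex_on_imp_above_tangent[where A = UNIV and c = 0 and x = 1] by simp
  then show ?thesis unfolding l_def by simp
qed

lemma strongly_convex_ge:
  fixes f :: "'d::euclidean_space \<Rightarrow> real"
  assumes sc: "strongly_convex \<mu> f" and gr: "\<And>x. (f has_derivative (\<lambda>v. gf x \<bullet> v)) (at x)"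
  shows "f x + gf x \<bullet> (y - x) + \<mu> / 2 * (norm (y - x))\<^sup>2 \<le> f y"
proof -
  have cv: "convex_on UNIV (\<lambda>x. f x - \<mu> / 2 * (x \<bullet> x))"
    using sc unfolding strongly_convex_def by (simp add: power2_norm_eq_inner)
  have "((\<lambda>x. f x - \<mu> / 2 * (x \<bullet> x)) has_derivative
          (\<lambda>v. gf x \<bullet> v - \<mu> / 2 * (x \<bullet> v + v \<bullet> x))) (at x)"
    by (intro derivative_eq_intros) (auto intro: gr)
  moreover have "(\<lambda>v. gf x \<bullet> v - \<mu> / 2 * (x \<bullet> v + v \<bullet> x)) = (\<lambda>v. (gf x - \<mu> *\<^sub>R x) \<bullet> v)"
    by (auto simp: fun_eq_iff inner_diff_left inner_diff_right inner_commute)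
  ultimately have "f x - \<mu> / 2 * (x \<bullet> x) + (gf x - \<mu> *\<^sub>R x) \<bullet> (y - x) \<le> f y - \<mu> / 2 * (y \<bullet> y)"
    using convex_on_has_derivative_ge[OF cv] by simp
  moreover have "(gf x - \<mu> *\<^sub>R x) \<bullet> (y - x) = gf x \<bullet> (y - x) - \<mu> * (x \<bullet> y) + \<mu> * (x \<bullet> x)"
    by (simp add: inner_diff_left inner_diff_right algebra_simps)
  moreover have "\<mu> / 2 * (norm (y - x))\<^sup>2 = \<mu> / 2 * (y \<bullet> y) - \<mu> * (x \<bullet> y) + \<mu> / 2 * (x \<bullet> x)"
    by (simp add: power2_norm_eq_inner inner_diff_left inner_diff_right inner_commute algebra_simps)
  ultimately show ?thesis by linarith
qed

lemma strongly_convex_gradient_monotone: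
  fixes f :: "'d::euclidean_space \<Rightarrow> real"
  assumes sc: "strongly_convex \<mu> f" and gr: "\<And>x. (f has_derivative (\<lambda>v. gf x \<bullet> v)) (at x)"
  shows "\<mu> * (norm (x - y))\<^sup>2 \<le> (gf x - gf y) \<bullet> (x - y)"
  using strongly_convex_ge[OF sc gr, of x y] strongly_convex_ge[OF sc gr, of y x]
  by (simp add: norm_minus_commute inner_diff_left inner_diff_right algebra_simps)

lemma strongly_convex_outside_ball:
  fixes f :: "'d::euclidean_space \<Rightarrow> real"
  assumes sc: "strongly_convex \<mu> f" and gr: "\<And>x. (f has_derivative (\<lambda>v. gf x \<bullet> v)) (at x)"
    and \<mu>: "\<mu> > 0" and c: "c \<ge> 0" and z: "norm z > (2 * norm (gf 0) + 2 * c) / \<mu> + 1"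
  shows "f 0 + c < f z"
proof -
  define G r where "G = norm (gf 0)" and "r = norm z"
  have "0 \<le> (2 * G + 2 * c) / \<mu>" using \<mu> c by (simp add: G_def)
  then have r1: "r \<ge> 1" using z by (simp add: r_def G_def)
  have "\<mu> / 2 * ((2 * G + 2 * c) / \<mu> + 1) \<le> \<mu> / 2 * r"
    using z \<mu> by (intro mult_left_mono) (auto simp: r_def G_def)
  moreover have "\<mu> / 2 * ((2 * G + 2 * c) / \<mu> + 1) = G + c + \<mu> / 2" using \<mu> by (simp add: field_simps)
  ultimately have h: "c + \<mu> / 2 \<le> \<mu> / 2 * r - G" by simp
  have "1 * (c + \<mu> / 2) \<le> r * (\<mu> / 2 * r - G)"
    by (rule mult_mono) (use r1 c \<mu> h in auto)
  then have "c < \<mu> / 2 * r\<^sup>2 - G * r" using \<mu> by (simp add: power2_eq_square algebra_simps)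
  moreover have "- (G * r) \<le> gf 0 \<bullet> z"
    using norm_cauchy_schwarz[of "- gf 0" z] by (simp add: G_def r_def)
  moreover have "f 0 + gf 0 \<bullet> z + \<mu> / 2 * r\<^sup>2 \<le> f z"
    using strongly_convex_ge[OF sc gr, of 0 z] by (simp add: r_def)
  ultimately show ?thesis by linarith
qed

definition is_prox :: "real \<Rightarrow> ('d::euclidean_space \<Rightarrow> real) \<Rightarrow> 'd \<Rightarrow> 'd \<Rightarrow> bool" where
  "is_prox \<gamma> \<phi> y p \<longleftrightarrow>
     (\<forall>z. \<phi> p + (norm (p - y))\<^sup>2 / (2 * \<gamma>) \<le> \<phi> z + (norm (z - y))\<^sup>2 / (2 * \<gamma>))"

lemma is_prox_optimality:
  fixes f :: "'d::euclidean_space \<Rightarrow> real"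
  assumes gr: "\<And>x. (f has_derivative (\<lambda>v. gf x \<bullet> v)) (at x)" and \<gamma>: "\<gamma> > 0"
    and p: "is_prox \<gamma> f y p"
  shows "p + \<gamma> *\<^sub>R gf p = y"
proof -
  define v where "v = gf p + (p - y) /\<^sub>R \<gamma>"
  let ?F = "\<lambda>z. f z + ((z - y) \<bullet> (z - y)) / (2 * \<gamma>)"
  have "(?F has_derivative (\<lambda>w. gf p \<bullet> w + (w \<bullet> (p - y) + (p - y) \<bullet> w) / (2 * \<gamma>))) (at p)"
    using \<gamma> by (intro derivative_eq_intros) (auto intro: gr)
  moreover have "eventually (\<lambda>z. ?F p \<le> ?F z) (at p)"
    using p unfolding is_prox_def by (simp add: power2_norm_eq_inner)
  ultimately have "(\<lambda>w. gf p \<bullet> w + (w \<bullet> (p - y) + (p - y) \<bullet> w) / (2 * \<gamma>)) = (\<lambda>w. 0)"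
    by (rule has_derivative_local_min)
  then have "gf p \<bullet> v + (v \<bullet> (p - y) + (p - y) \<bullet> v) / (2 * \<gamma>) = 0"
    by (rule fun_cong)
  moreover have "(v \<bullet> (p - y) + (p - y) \<bullet> v) / (2 * \<gamma>) = ((p - y) \<bullet> v) / \<gamma>"
    using \<gamma> by (simp add: inner_commute)
  moreover have "((p - y) \<bullet> v) / \<gamma> = ((p - y) /\<^sub>R \<gamma>) \<bullet> v"
    by (simp add: divide_inverse mult.commute)
  moreover have "v \<bullet> v = gf p \<bullet> v + ((p - y) /\<^sub>R \<gamma>) \<bullet> v"
    by (metis v_def inner_add_left)
  ultimately have "\<gamma> *\<^sub>R (gf p + (p - y) /\<^sub>R \<gamma>) = 0" by (simp add: v_def)
  then show ?thesis using \<gamma> by (simp add: algebra_simps)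
qed

lemma is_prox_contraction:
  fixes f :: "'d::euclidean_space \<Rightarrow> real"
  assumes sc: "strongly_convex \<mu> f" and gr: "\<And>x. (f has_derivative (\<lambda>v. gf x \<bullet> v)) (at x)"
    and \<gamma>: "\<gamma> > 0" and p: "is_prox \<gamma> f y p"
  shows "(1 + \<gamma> * \<mu>) * norm (p - z) \<le> norm (y - (z + \<gamma> *\<^sub>R gf z))"
proof -
  have y: "y = p + \<gamma> *\<^sub>R gf p" using is_prox_optimality[OF gr \<gamma> p] by simp
  have "(1 + \<gamma> * \<mu>) * (norm (p - z))\<^sup>2 \<le> (norm (p - z))\<^sup>2 + \<gamma> * ((gf p - gf z) \<bullet> (p - z))"
    using mult_left_mono[OF strongly_convex_gradient_monotone[OF sc gr, of p z], of \<gamma>] \<gamma>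
    by (simp add: algebra_simps)
  also have "\<dots> = (y - (z + \<gamma> *\<^sub>R gf z)) \<bullet> (p - z)"
    unfolding y by (simp add: power2_norm_eq_inner inner_diff_left inner_add_left algebra_simps)
  also have "\<dots> \<le> norm (y - (z + \<gamma> *\<^sub>R gf z)) * norm (p - z)"
    by (rule norm_cauchy_schwarz)
  finally have "(1 + \<gamma> * \<mu>) * norm (p - z) * norm (p - z) \<le> norm (y - (z + \<gamma> *\<^sub>R gf z)) * norm (p - z)"
    by (simp add: power2_eq_square mult.assoc)
  then show ?thesis
    by (cases "p = z") (simp_all add: mult_le_cancel_right)
qed

lemma is_prox_exists:
  fixes f :: "'d::euclidean_space \<Rightarrow> real"
  assumes sc: "strongly_convex \<mu> f" and gr: "\<And>x. (f has_derivative (\<lambda>v. gf x \<bullet> v)) (at x)"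
    and \<mu>: "\<mu> > 0" and \<gamma>: "\<gamma> > 0"
  obtains p where "is_prox \<gamma> f y p"
proof -
  let ?F = "\<lambda>z. f z + (norm (z - y))\<^sup>2 / (2 * \<gamma>)"
  define c where "c = (norm y)\<^sup>2 / (2 * \<gamma>)"
  define R where "R = (2 * norm (gf 0) + 2 * c) / \<mu> + 1"
  have c: "c \<ge> 0" and R: "0 \<le> R" using \<gamma> \<mu> by (auto simp: c_def R_def)
  have f: "continuous_on UNIV f"
    using gr by (meson continuous_at_imp_continuous_on has_derivative_continuous)
  have "continuous_on (cball 0 R) ?F"
    using \<gamma> by (intro continuous_intros continuous_on_subset[OF f]) auto
  moreover have "cball 0 R \<noteq> {}" using R by simp
  ultimately obtain p where min: "\<And>z. z \<in> cball 0 R \<Longrightarrow> ?F p \<le> ?F z"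
    using continuous_attains_inf[OF compact_cball] by blast
  have "?F p \<le> ?F z" for z
  proof (cases "z \<in> cball 0 R")
    case False
    then have "?F p \<le> f 0 + c"
      using min[of 0] R by (simp add: c_def)
    also have "\<dots> < f z"
      using False strongly_convex_outside_ball[OF sc gr \<mu> c] by (simp add: R_def)
    moreover have "0 \<le> (norm (z - y))\<^sup>2 / (2 * \<gamma>)" using \<gamma> by simp
    ultimately show ?thesis by linarith
  qed (rule min)
  then show ?thesis using that unfolding is_prox_def by blast
qed

lemma prox_eqI:
  fixes f :: "'d::euclidean_space \<Rightarrow> real"
  assumes sc: "strongly_convex \<mu> f" and gr: "\<And>x. (f has_derivative (\<lambda>v. gf x \<bullet> v)) (at x)"
    and \<mu>: "\<mu> \<ge> 0" and \<gamma>: "\<gamma> > 0" and p: "is_prox \<gamma> f y p"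
  shows "prox \<gamma> f y = p"
  unfolding prox_def
proof (rule the_equality)
  fix q assume "\<forall>z. f q + (norm (q - y))\<^sup>2 / (2 * \<gamma>) \<le> f z + (norm (z - y))\<^sup>2 / (2 * \<gamma>)"
  then have "(1 + \<gamma> * \<mu>) * norm (q - p) \<le> 0"
    using is_prox_contraction[OF sc gr \<gamma>, of y q p] is_prox_optimality[OF gr \<gamma> p]
    unfolding is_prox_def by simp
  moreover have "1 + \<gamma> * \<mu> > 0" using \<gamma> \<mu> by (simp add: add_pos_nonneg)
  ultimately show "q = p" by (simp add: mult_le_0_iff)
qed (use p in \<open>simp add: is_prox_def\<close>)

lemma prox_contraction:
  fixes f :: "'d::euclidean_space \<Rightarrow> real"
  assumes sc: "strongly_convex \<mu> f" and gr: "\<And>x. (f has_derivative (\<lambda>v. gf x \<bullet> v)) (at x)"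
    and \<mu>: "\<mu> > 0" and \<gamma>: "\<gamma> > 0"
  shows "(1 + \<gamma> * \<mu>) * norm (prox \<gamma> f y - z) \<le> norm (y - (z + \<gamma> *\<^sub>R gf z))"
proof -
  obtain p where p: "is_prox \<gamma> f y p" using is_prox_exists[OF sc gr \<mu> \<gamma>] .
  show ?thesis
    using prox_eqI[OF sc gr _ \<gamma> p] \<mu> is_prox_contraction[OF sc gr \<gamma> p] by simp
qed

lemma nn_integral_add_cmult_le:
  fixes f g :: "'a \<Rightarrow> ennreal"
  assumes [measurable]: "f \<in> borel_measurable M" and r: "r \<ge> 0"
  shows "(\<integral>\<^sup>+x. f x + ennreal r * g x \<partial>M) \<le> (\<integral>\<^sup>+x. f x \<partial>M) + ennreal r * (\<integral>\<^sup>+x. g x \<partial>M)"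
proof (cases "r = 0")
  case False
  then have r: "r > 0" using r by simp
  have rr: "ennreal r * ennreal (1 / r) = 1" using r by (simp add: ennreal_mult[symmetric])
  show ?thesis
    unfolding nn_integral_def_finite[of M "\<lambda>x. f x + ennreal r * g x"]
  proof (rule SUP_least)
    fix h assume "h \<in> {h. simple_function M h \<and> h \<le> (\<lambda>x. f x + ennreal r * g x) \<and> (\<forall>x. h x < top)}"
    then have hs: "simple_function M h" and hle: "\<And>x. h x \<le> f x + ennreal r * g x"
      and hfin: "\<And>x. h x < top"
      by (auto simp: le_fun_def)
    have [measurable]: "h \<in> borel_measurable M" by (rule borel_measurable_simple_function[OF hs])
    \<comment> \<open>\<open>g\<close> need not be measurable, so it is replaced by the measurable minorant \<open>k\<close>.\<close>
    define k where "k x = (if h x \<le> f x then 0 else (h x - f x) * ennreal (1 / r))" for x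
    have [measurable]: "k \<in> borel_measurable M" unfolding k_def by measurable
    have kg: "k x \<le> g x" for x
    proof (cases "h x \<le> f x")
      case False
      have "h x - f x \<le> ennreal r * g x"
        unfolding ennreal_minus_le_iff using hle[of x] hfin[of x] by auto
      then have "(h x - f x) * ennreal (1 / r) \<le> ennreal r * g x * ennreal (1 / r)"
        by (rule mult_right_mono) simp
      also have "\<dots> = g x" by (metis rr mult.commute mult.assoc mult.right_neutral)
      finally show ?thesis using False by (simp add: k_def)
    qed (simp add: k_def)
    have hk: "h x \<le> f x + ennreal r * k x" for x
    proof (cases "h x \<le> f x")
      case False
      then have "ennreal r * k x = (h x - f x) * (ennreal r * ennreal (1 / r))"
        by (simp add: k_def mult.commute mult.left_commute)
      then show ?thesis using False rr by (simp add: add_diff_inverse_ennreal)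
    qed (simp add: k_def)
    have "integral\<^sup>S M h = (\<integral>\<^sup>+x. h x \<partial>M)"
      by (rule nn_integral_eq_simple_integral[OF hs, symmetric])
    also have "\<dots> \<le> (\<integral>\<^sup>+x. f x + ennreal r * k x \<partial>M)" by (rule nn_integral_mono) (rule hk)
    also have "\<dots> = (\<integral>\<^sup>+x. f x \<partial>M) + ennreal r * (\<integral>\<^sup>+x. k x \<partial>M)"
      by (simp add: nn_integral_add nn_integral_cmult)
    also have "\<dots> \<le> (\<integral>\<^sup>+x. f x \<partial>M) + ennreal r * (\<integral>\<^sup>+x. g x \<partial>M)"
      by (intro add_left_mono mult_left_mono nn_integral_mono kg) simp
    finally show "integral\<^sup>S M h \<le> (\<integral>\<^sup>+x. f x \<partial>M) + ennreal r * (\<integral>\<^sup>+x. g x \<partial>M)" .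
  qed
qed simp

lemma (in prob_space) nn_integral_affine_le:
  fixes u v :: "'a \<Rightarrow> real"
  assumes [measurable]: "u \<in> borel_measurable M"
    and "A \<ge> 0" "B \<ge> 0" "C \<ge> 0" "\<And>x. u x \<ge> 0" "\<And>x. v x \<ge> 0"
  shows "(\<integral>\<^sup>+x. ennreal (A * u x + B * v x + C) \<partial>M)
      \<le> ennreal A * (\<integral>\<^sup>+x. ennreal (u x) \<partial>M) + ennreal B * (\<integral>\<^sup>+x. ennreal (v x) \<partial>M) + ennreal C"
proof -
  have "(\<integral>\<^sup>+x. ennreal (A * u x + B * v x + C) \<partial>M)
      = (\<integral>\<^sup>+x. (ennreal A * ennreal (u x) + ennreal C) + ennreal B * ennreal (v x) \<partial>M)"
    using assms by (intro nn_integral_cong) (simp add: ennreal_mult ennreal_plus ac_simps)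
  also have "\<dots> \<le> (\<integral>\<^sup>+x. ennreal A * ennreal (u x) + ennreal C \<partial>M) + ennreal B * (\<integral>\<^sup>+x. ennreal (v x) \<partial>M)"
    by (rule nn_integral_add_cmult_le) (use assms in auto)
  also have "(\<integral>\<^sup>+x. ennreal A * ennreal (u x) + ennreal C \<partial>M) = ennreal A * (\<integral>\<^sup>+x. ennreal (u x) \<partial>M) + ennreal C"
    by (simp add: nn_integral_add nn_integral_cmult emeasure_space_1)
  finally show ?thesis by (simp add: ac_simps)
qed

lemma integrable_mult_square_integrable:
  fixes f g :: "'a \<Rightarrow> real"
  assumes "f \<in> borel_measurable M" "g \<in> borel_measurable M"
    and "integrable M (\<lambda>x. (f x)\<^sup>2)" "integrable M (\<lambda>x. (g x)\<^sup>2)"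
  shows "integrable M (\<lambda>x. f x * g x)"
proof (rule Bochner_Integration.integrable_bound[of M "\<lambda>x. (f x)\<^sup>2 + (g x)\<^sup>2"])
  have "\<bar>a * b\<bar> \<le> a\<^sup>2 + b\<^sup>2" for a b :: real
  proof -
    have "2 * \<bar>a\<bar> * \<bar>b\<bar> \<le> a\<^sup>2 + b\<^sup>2" using sum_squares_bound[of "\<bar>a\<bar>" "\<bar>b\<bar>"] by simp
    moreover have "0 \<le> \<bar>a\<bar> * \<bar>b\<bar>" by simp
    ultimately show ?thesis unfolding abs_mult by linarith
  qed
  then show "AE x in M. norm (f x * g x) \<le> norm ((f x)\<^sup>2 + (g x)\<^sup>2)"
    by (simp del: abs_mult)
qed (use assms in auto)

lemma (in prob_space) square_integrable_imp_integrable: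
  fixes f :: "'a \<Rightarrow> real"
  assumes "f \<in> borel_measurable M" and "integrable M (\<lambda>x. (f x)\<^sup>2)"
  shows "integrable M f"
  using integrable_mult_square_integrable[of f M "\<lambda>_. 1"] assms by simp

lemma square_integrable_inner_Basis:
  fixes Y :: "'a \<Rightarrow> 'd::euclidean_space"
  assumes "Y \<in> borel_measurable M" "integrable M (\<lambda>x. (norm (Y x))\<^sup>2)" and b: "b \<in> Basis"
  shows "integrable M (\<lambda>x. (Y x \<bullet> b)\<^sup>2)"
proof (rule Bochner_Integration.integrable_bound[OF assms(2)])
  have "\<bar>Y x \<bullet> b\<bar>\<^sup>2 \<le> (norm (Y x))\<^sup>2" for x
    using Basis_le_norm[OF b] by (rule power_mono) simp
  then show "AE x in M. norm ((Y x \<bullet> b)\<^sup>2) \<le> norm ((norm (Y x))\<^sup>2)" by simp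
qed (use assms in simp)

lemma (in prob_space) integral_mult_noise_eq_0:
  fixes y h g :: "'a \<Rightarrow> real"
  assumes F: "sigma_finite_subalgebra M F" and yF: "y \<in> borel_measurable F"
    and [measurable]: "h \<in> borel_measurable M" "g \<in> borel_measurable M"
    and y2: "integrable M (\<lambda>x. (y x)\<^sup>2)" and hg2: "integrable M (\<lambda>x. (h x - g x)\<^sup>2)"
    and g: "integrable M g" "expectation g = 0" and ind: "indep_var borel g borel y"
    and h: "AE x in M. real_cond_exp M F h x = 0"
  shows "integrable M (\<lambda>x. y x * (h x - g x))" "(\<integral>x. y x * (h x - g x) \<partial>M) = 0"
proof -
  interpret sigma_finite_subalgebra M F by (rule F)
  have [measurable]: "y \<in> borel_measurable M" by (rule measurable_from_subalg[OF subalg yF])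
  show yhg: "integrable M (\<lambda>x. y x * (h x - g x))"
    by (rule integrable_mult_square_integrable) (use y2 hg2 in auto)
  have "integrable M y" by (rule square_integrable_imp_integrable) (use y2 in auto)
  then have gy: "integrable M (\<lambda>x. g x * y x)" and gy0: "(\<integral>x. g x * y x \<partial>M) = 0"
    using indep_var_integrable[OF ind g(1)] indep_var_lebesgue_integral[OF ind g(1)] g(2) by auto
  have split: "y x * h x = y x * (h x - g x) + g x * y x" for x by (simp add: algebra_simps)
  have yh: "integrable M (\<lambda>x. y x * h x)" unfolding split using yhg gy by simp
  have "(\<integral>x. y x * (h x - g x) \<partial>M) = (\<integral>x. y x * h x \<partial>M)"
    unfolding split using yhg gy gy0 by simp
  also have "\<dots> = (\<integral>x. y x * real_cond_exp M F h x \<partial>M)"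
    using real_cond_exp_intg(2)[OF yh yF] by simp
  also have "\<dots> = 0" using h by (intro integral_eq_zero_AE) auto
  finally show "(\<integral>x. y x * (h x - g x) \<partial>M) = 0" .
qed

lemma (in prob_space) integral_inner_noise_eq_0:
  fixes Y H G :: "'a \<Rightarrow> 'd::euclidean_space"
  assumes F: "sigma_finite_subalgebra M F" and YF: "Y \<in> borel_measurable F"
    and [measurable]: "H \<in> borel_measurable M" "G \<in> borel_measurable M"
    and Y2: "integrable M (\<lambda>x. (norm (Y x))\<^sup>2)" and HG2: "integrable M (\<lambda>x. (norm (H x - G x))\<^sup>2)"
    and G: "integrable M G" "expectation G = 0" and ind: "indep_var borel G borel Y"
    and H: "\<And>b. b \<in> Basis \<Longrightarrow> AE x in M. real_cond_exp M F (\<lambda>x. H x \<bullet> b) x = 0"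
  shows "integrable M (\<lambda>x. Y x \<bullet> (H x - G x))" "(\<integral>x. Y x \<bullet> (H x - G x) \<partial>M) = 0"
proof -
  interpret sigma_finite_subalgebra M F by (rule F)
  have [measurable]: "Y \<in> borel_measurable M" by (rule measurable_from_subalg[OF subalg YF])
  have "integrable M (\<lambda>x. (Y x \<bullet> b) * (H x \<bullet> b - G x \<bullet> b)) \<and>
        (\<integral>x. (Y x \<bullet> b) * (H x \<bullet> b - G x \<bullet> b) \<partial>M) = 0" if b: "b \<in> Basis" for b
  proof -
    have "indep_var borel ((\<lambda>v. v \<bullet> b) \<circ> G) borel ((\<lambda>v. v \<bullet> b) \<circ> Y)"
      by (rule indep_var_compose[OF ind]) auto
    moreover have "integrable M (\<lambda>x. ((H x - G x) \<bullet> b)\<^sup>2)"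
      by (rule square_integrable_inner_Basis[OF _ HG2 b]) measurable
    ultimately show ?thesis
      using integral_mult_noise_eq_0[OF F _ _ _ square_integrable_inner_Basis[OF _ Y2 b], of "\<lambda>x. H x \<bullet> b" "\<lambda>x. G x \<bullet> b"]
        YF G H[OF b]
      by (auto simp: comp_def inner_diff_left)
  qed
  moreover have "Y x \<bullet> (H x - G x) = (\<Sum>b\<in>Basis. (Y x \<bullet> b) * (H x \<bullet> b - G x \<bullet> b))" for x
    by (subst euclidean_inner) (simp add: inner_diff_left)
  ultimately show "integrable M (\<lambda>x. Y x \<bullet> (H x - G x))" "(\<integral>x. Y x \<bullet> (H x - G x) \<partial>M) = 0"
    by (simp_all add: Bochner_Integration.integral_sum)
qed

lemma norm_add_scaleR_sq:
  fixes a b :: "'d::real_inner"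
  shows "(norm (a + t *\<^sub>R b))\<^sup>2 = (norm a)\<^sup>2 + 2 * t * (a \<bullet> b) + t\<^sup>2 * (norm b)\<^sup>2"
proof -
  have "(norm (a + t *\<^sub>R b))\<^sup>2 = a \<bullet> a + t * (a \<bullet> b) + t * (b \<bullet> a) + t * t * (b \<bullet> b)"
    by (simp add: power2_norm_eq_inner inner_add_left inner_add_right algebra_simps)
  then show ?thesis
    by (simp add: power2_norm_eq_inner[symmetric] inner_commute[of b a] power2_eq_square algebra_simps)
qed

lemma nn_integral_norm_add_scaleR_sq_le:
  fixes Y Z :: "'a \<Rightarrow> 'd::euclidean_space"
  assumes [measurable]: "Y \<in> borel_measurable M" "Z \<in> borel_measurable M"
    and orth: "integrable M (\<lambda>x. (norm (Y x))\<^sup>2) \<Longrightarrow> integrable M (\<lambda>x. (norm (Z x))\<^sup>2) \<Longrightarrow>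
      integrable M (\<lambda>x. Y x \<bullet> Z x) \<and> (\<integral>x. Y x \<bullet> Z x \<partial>M) = 0"
  shows "(\<integral>\<^sup>+x. ennreal ((norm (Y x + t *\<^sub>R Z x))\<^sup>2) \<partial>M)
      \<le> (\<integral>\<^sup>+x. ennreal ((norm (Y x))\<^sup>2) \<partial>M) + ennreal (t\<^sup>2) * (\<integral>\<^sup>+x. ennreal ((norm (Z x))\<^sup>2) \<partial>M)"
    (is "?L \<le> ?NY + ennreal (t\<^sup>2) * ?NZ")
proof (cases "t \<noteq> 0 \<and> ?NY < \<top> \<and> ?NZ < \<top>")
  case True
  then have Y2: "integrable M (\<lambda>x. (norm (Y x))\<^sup>2)" and Z2: "integrable M (\<lambda>x. (norm (Z x))\<^sup>2)"
    by (auto intro: integrableI_nonneg)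
  note YZ = orth[OF Y2 Z2]
  have "?L = (\<integral>\<^sup>+x. ennreal ((norm (Y x))\<^sup>2 + 2 * t * (Y x \<bullet> Z x) + t\<^sup>2 * (norm (Z x))\<^sup>2) \<partial>M)"
    by (simp add: norm_add_scaleR_sq)
  also have "\<dots> = ennreal (\<integral>x. (norm (Y x))\<^sup>2 + 2 * t * (Y x \<bullet> Z x) + t\<^sup>2 * (norm (Z x))\<^sup>2 \<partial>M)"
  proof (rule nn_integral_eq_integral)
    show "integrable M (\<lambda>x. (norm (Y x))\<^sup>2 + 2 * t * (Y x \<bullet> Z x) + t\<^sup>2 * (norm (Z x))\<^sup>2)"
      using Y2 Z2 YZ by simp
  qed (simp flip: norm_add_scaleR_sq)
  also have "\<dots> = ennreal ((\<integral>x. (norm (Y x))\<^sup>2 \<partial>M) + t\<^sup>2 * (\<integral>x. (norm (Z x))\<^sup>2 \<partial>M))"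
    using Y2 Z2 YZ by simp
  also have "\<dots> = ?NY + ennreal (t\<^sup>2) * ?NZ"
    using Y2 Z2 by (simp add: nn_integral_eq_integral ennreal_plus ennreal_mult)
  finally show ?thesis by simp
next
  case False
  then consider "t = 0" | "?NY = \<top>" | "t \<noteq> 0" "?NZ = \<top>"
    unfolding less_top[symmetric] by blast
  then show ?thesis by cases (simp_all add: ennreal_mult_top)
qed

lemma (in sigma_finite_subalgebra) nn_integral_le_of_nn_cond_exp_le:
  assumes "g \<in> borel_measurable M" and "AE x in M. nn_cond_exp M F g x \<le> u x"
  shows "(\<integral>\<^sup>+x. g x \<partial>M) \<le> (\<integral>\<^sup>+x. u x \<partial>M)"
proof -
  have "(\<integral>\<^sup>+x. g x \<partial>M) = (\<integral>\<^sup>+x. nn_cond_exp M F g x \<partial>M)"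
    using nn_cond_exp_intg[of "\<lambda>_. 1" g] assms(1) by simp
  also have "\<dots> \<le> (\<integral>\<^sup>+x. u x \<partial>M)" by (rule nn_integral_mono_AE) (rule assms(2))
  finally show ?thesis .
qed

lemma (in prob_space) expected_sq_norm_step_le:
  fixes Y H G :: "'a \<Rightarrow> 'd::euclidean_space" and S :: "'a \<Rightarrow> real"
  assumes F: "sigma_finite_subalgebra M F" and YF: "Y \<in> borel_measurable F"
    and [measurable]: "H \<in> borel_measurable M" "G \<in> borel_measurable M"
    and G: "integrable M G" "expectation G = 0" and ind: "indep_var borel G borel Y"
    and mean: "\<And>b. b \<in> Basis \<Longrightarrow> AE x in M. real_cond_exp M F (\<lambda>x. H x \<bullet> b) x = 0"
    and var: "AE x in M. nn_cond_exp M F (\<lambda>x. ennreal ((norm (H x - G x))\<^sup>2)) x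
                \<le> ennreal (A * (norm (Y x))\<^sup>2 + B * S x + C)"
    and ABC: "A \<ge> 0" "B \<ge> 0" "C \<ge> 0" and S: "\<And>x. S x \<ge> 0"
  shows "(\<integral>\<^sup>+x. ennreal ((norm (Y x + t *\<^sub>R (H x - G x)))\<^sup>2) \<partial>M)
      \<le> ennreal (1 + t\<^sup>2 * A) * (\<integral>\<^sup>+x. ennreal ((norm (Y x))\<^sup>2) \<partial>M)
        + ennreal (t\<^sup>2 * B) * (\<integral>\<^sup>+x. ennreal (S x) \<partial>M) + ennreal (t\<^sup>2 * C)"
proof -
  interpret sigma_finite_subalgebra M F by (rule F)
  have [measurable]: "Y \<in> borel_measurable M" by (rule measurable_from_subalg[OF subalg YF])
  define NY where "NY = (\<integral>\<^sup>+x. ennreal ((norm (Y x))\<^sup>2) \<partial>M)"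
  define NS where "NS = (\<integral>\<^sup>+x. ennreal (S x) \<partial>M)"
  have "(\<integral>\<^sup>+x. ennreal ((norm (H x - G x))\<^sup>2) \<partial>M) \<le> (\<integral>\<^sup>+x. ennreal (A * (norm (Y x))\<^sup>2 + B * S x + C) \<partial>M)"
    by (rule nn_integral_le_of_nn_cond_exp_le[OF _ var]) measurable
  also have "\<dots> \<le> ennreal A * NY + ennreal B * NS + ennreal C"
    unfolding NY_def NS_def by (rule nn_integral_affine_le) (use ABC S in auto)
  finally have NZ: "(\<integral>\<^sup>+x. ennreal ((norm (H x - G x))\<^sup>2) \<partial>M) \<le> ennreal A * NY + ennreal B * NS + ennreal C" .
  have "(\<integral>\<^sup>+x. ennreal ((norm (Y x + t *\<^sub>R (H x - G x)))\<^sup>2) \<partial>M)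
      \<le> NY + ennreal (t\<^sup>2) * (\<integral>\<^sup>+x. ennreal ((norm (H x - G x))\<^sup>2) \<partial>M)"
    unfolding NY_def
    using integral_inner_noise_eq_0[OF F YF _ _ _ _ G ind mean]
    by (intro nn_integral_norm_add_scaleR_sq_le) auto
  also have "\<dots> \<le> NY + ennreal (t\<^sup>2) * (ennreal A * NY + ennreal B * NS + ennreal C)"
    by (intro add_left_mono mult_left_mono NZ) simp
  also have "\<dots> = ennreal (1 + t\<^sup>2 * A) * NY + ennreal (t\<^sup>2 * B) * NS + ennreal (t\<^sup>2 * C)"
    using ABC by (simp add: ennreal_plus ennreal_mult distrib_left distrib_right ac_simps)
  finally show ?thesis unfolding NY_def NS_def .
qed

lemma ennreal_divide_affine:
  fixes X Y :: ennreal
  assumes "c \<ge> 0" "a \<ge> 0" "b \<ge> 0" "d \<ge> 0"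
  shows "ennreal (1 / c) * (ennreal a * X + ennreal b * Y + ennreal d)
    = ennreal (a / c) * X + ennreal (b / c) * Y + ennreal (d / c)"
proof -
  have "ennreal (1 / c) * ennreal t = ennreal (t / c)" if "t \<ge> 0" for t
    using that assms(1) by (simp add: ennreal_mult[symmetric])
  with assms show ?thesis by (simp add: distrib_left mult.assoc[symmetric])
qed

lemma nn_integral_sq_norm_le_of_scaled_le:
  fixes V W :: "'a \<Rightarrow> 'd::real_normed_vector"
  assumes c: "c > 0" and [measurable]: "V \<in> borel_measurable M"
    and le: "\<And>x. x \<in> space M \<Longrightarrow> c * norm (W x) \<le> norm (V x)"
  shows "(\<integral>\<^sup>+x. ennreal ((norm (W x))\<^sup>2) \<partial>M) \<le> ennreal (1 / c\<^sup>2) * (\<integral>\<^sup>+x. ennreal ((norm (V x))\<^sup>2) \<partial>M)"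
proof -
  have "(norm (W x))\<^sup>2 \<le> 1 / c\<^sup>2 * (norm (V x))\<^sup>2" if "x \<in> space M" for x
  proof -
    have "(c * norm (W x))\<^sup>2 \<le> (norm (V x))\<^sup>2"
      using le[OF that] c by (intro power_mono) auto
    then show ?thesis using c by (simp add: field_simps power_mult_distrib)
  qed
  then have "(\<integral>\<^sup>+x. ennreal ((norm (W x))\<^sup>2) \<partial>M) \<le> (\<integral>\<^sup>+x. ennreal (1 / c\<^sup>2) * ennreal ((norm (V x))\<^sup>2) \<partial>M)"
    by (intro nn_integral_mono) (simp add: ennreal_mult[symmetric] ennreal_leI)
  also have "\<dots> = ennreal (1 / c\<^sup>2) * (\<integral>\<^sup>+x. ennreal ((norm (V x))\<^sup>2) \<partial>M)"
    by (rule nn_integral_cmult) measurable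
  finally show ?thesis .
qed

lemma gradient_eq_0_at_minimum:
  fixes g :: "'d::real_inner"
  assumes "(F has_derivative (\<lambda>v. g \<bullet> v)) (at x)" and "\<And>y. F x \<le> F y"
  shows "g = 0"
proof -
  have "(\<lambda>v. g \<bullet> v) = (\<lambda>v. 0)"
    by (rule has_derivative_local_min[OF assms(1)]) (auto intro: always_eventually assms(2))
  then have "g \<bullet> g = 0" by metis
  then show ?thesis by simp
qed

lemma (in prob_space) indep_set_mono:
  assumes "indep_set A B" "A' \<subseteq> A" "B' \<subseteq> B"
  shows "indep_set A' B'"
  using assms unfolding indep_set_def
  by (elim indep_sets_mono_sets) (auto split: bool.split)

lemma (in prob_space) indep_var_sample_iterate:
  fixes f :: "'e \<Rightarrow> 'b::topological_space" and g :: "'d::topological_space \<Rightarrow> 'b"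
  assumes xi: "\<xi> j \<in> measurable M D" and x: "x j \<in> borel_measurable M"
    and indep: "indep_set (var_events M D (\<xi> j)) (past_events M D x \<phi> \<xi> j)"
    and f: "f \<in> borel_measurable D" and g: "g \<in> borel_measurable borel"
  shows "indep_var borel (\<lambda>\<omega>. f (\<xi> j \<omega>)) borel (\<lambda>\<omega>. g (x j \<omega>))"
  unfolding indep_var_eq
proof (intro conjI)
  show "random_variable borel (\<lambda>\<omega>. f (\<xi> j \<omega>))" "random_variable borel (\<lambda>\<omega>. g (x j \<omega>))"
    using measurable_compose[OF xi f] measurable_compose[OF x g] by auto
  define N where "N = vimage_algebra (space M) (\<xi> j) D"
  have "\<xi> j \<in> space M \<rightarrow> space D" using measurable_space[OF xi] by auto
  then have N: "space N = space M" "sets N = var_events M D (\<xi> j)" "\<xi> j \<in> measurable N D"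
    unfolding N_def var_events_def by (auto simp: sets_vimage_algebra2 intro: measurable_vimage_algebra1)
  then have "(\<lambda>\<omega>. f (\<xi> j \<omega>)) \<in> borel_measurable N" using f by measurable
  then have "sigma_sets (space M) {(\<lambda>\<omega>. f (\<xi> j \<omega>)) -` A \<inter> space M |A. A \<in> sets borel}
      \<subseteq> var_events M D (\<xi> j)"
    unfolding N(1,2)[symmetric] by (intro sets.sigma_sets_subset) (auto intro: measurable_sets)
  moreover have "sigma_sets (space M) {(\<lambda>\<omega>. g (x j \<omega>)) -` A \<inter> space M |A. A \<in> sets borel}
      \<subseteq> past_events M D x \<phi> \<xi> j"
    unfolding past_events_def
  proof (intro sigma_sets_mono' subsetI)
    fix S assume "S \<in> {(\<lambda>\<omega>. g (x j \<omega>)) -` A \<inter> space M |A. A \<in> sets borel}"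
    then obtain A where "A \<in> sets borel" "S = x j -` (g -` A \<inter> space borel) \<inter> space M" by auto
    moreover have "g -` A \<inter> space borel \<in> sets borel" using g \<open>A \<in> sets borel\<close> by measurable
    ultimately show "S \<in> (\<Union>i\<le>j. {x i -` A \<inter> space M |A. A \<in> sets borel})
        \<union> (\<Union>i\<le>j. {\<phi> i -` A \<inter> space M |A. A \<in> sets borel}) \<union> (\<Union>i<j. {\<xi> i -` A \<inter> space M |A. A \<in> sets D})"
      by blast
  qed
  ultimately show "indep_set (sigma_sets (space M) {(\<lambda>\<omega>. f (\<xi> j \<omega>)) -` A \<inter> space M |A. A \<in> sets borel})
      (sigma_sets (space M) {(\<lambda>\<omega>. g (x j \<omega>)) -` A \<inter> space M |A. A \<in> sets borel})"
    using indep_set_mono[OF indep] by auto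
qed

lemma sigma_finite_subalgebra_gen_alg:
  assumes "prob_space M" and "X \<in> borel_measurable M"
  shows "sigma_finite_subalgebra M (gen_alg M X)"
proof -
  interpret prob_space M by fact
  have "subalgebra M (gen_alg M X)"
    unfolding subalgebra_def gen_alg_def using sets_image_in_sets[OF _ assms(2)] by auto
  then show ?thesis
    by (intro finite_measure_subalgebra_is_sigma_finite)
      (simp add: finite_measure_subalgebra_def finite_measure_subalgebra_axioms_def finite_measure_axioms)
qed

lemma measurable_gen_alg_fst:
  fixes X :: "'a \<Rightarrow> 'b::topological_space \<times> 'c::topological_space"
  shows "(\<lambda>\<omega>. fst (X \<omega>)) \<in> borel_measurable (gen_alg M X)"
proof -
  have "X \<in> measurable (gen_alg M X) borel"
    unfolding gen_alg_def by (rule measurable_vimage_algebra1) simp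
  moreover have "fst \<in> borel_measurable (borel :: ('b \<times> 'c) measure)"
    by (intro borel_measurable_continuous_onI continuous_intros)
  ultimately show ?thesis using measurable_compose by fastforce
qed

lemma (in prob_space) gradient_sample_at_minimizer:
  fixes gf :: "'e \<Rightarrow> 'd::euclidean_space \<Rightarrow> 'd"
  assumes xi: "\<xi> \<in> measurable M D" and distr: "distr M D \<xi> = D"
    and int: "integrable D (\<lambda>e. gf e x)"
    and deriv: "(F has_derivative (\<lambda>v. (\<integral>e. gf e x \<partial>D) \<bullet> v)) (at x)" and min: "\<And>y. F x \<le> F y"
  shows "integrable M (\<lambda>\<omega>. gf (\<xi> \<omega>) x)" "expectation (\<lambda>\<omega>. gf (\<xi> \<omega>) x) = 0"
proof -
  have [measurable]: "(\<lambda>e. gf e x) \<in> borel_measurable D" using int by auto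
  show "integrable M (\<lambda>\<omega>. gf (\<xi> \<omega>) x)"
    using integrable_distr_eq[OF xi, of "\<lambda>e. gf e x"] int distr by simp
  have "expectation (\<lambda>\<omega>. gf (\<xi> \<omega>) x) = (\<integral>e. gf e x \<partial>D)"
    using integral_distr[OF xi, of "\<lambda>e. gf e x"] distr by simp
  also have "\<dots> = 0" by (rule gradient_eq_0_at_minimum[OF deriv min])
  finally show "expectation (\<lambda>\<omega>. gf (\<xi> \<omega>) x) = 0" .
qed

theorem mainTheorem2:
  fixes M :: "'a measure" and D :: "'e measure"
    and f :: "'e \<Rightarrow> 'd::euclidean_space \<Rightarrow> real"
    and gradf :: "'e \<Rightarrow> 'd \<Rightarrow> 'd"
    and \<mu> \<gamma> A1 B1 C1 A2 B2 C2 :: real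
    and xstar x0 :: 'd and \<phi>0 :: "'m::euclidean_space"
    and x h :: "nat \<Rightarrow> 'a \<Rightarrow> 'd" and \<phi> :: "nat \<Rightarrow> 'a \<Rightarrow> 'm" and \<xi> :: "nat \<Rightarrow> 'a \<Rightarrow> 'e"
    and \<sigma>sq :: "'m \<Rightarrow> real"
    and k :: nat
  assumes M: "prob_space M" and Dp: "prob_space D"
    and mu: "\<mu> > 0"
    and grad: "\<And>e x. (f e has_derivative (\<lambda>v. gradf e x \<bullet> v)) (at x)"
    and sconv: "\<And>e. strongly_convex \<mu> (f e)"
    and f_int: "\<And>y. integrable D (\<lambda>e. f e y)"
    and g_int: "\<And>y. integrable D (\<lambda>e. gradf e y)"
    and f_grad: "\<And>y. ((\<lambda>z. \<integral>e. f e z \<partial>D) has_derivative (\<lambda>v. (\<integral>e. gradf e y \<partial>D) \<bullet> v)) (at y)"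
    and xstar: "\<And>y. (\<integral>e. f e xstar \<partial>D) \<le> (\<integral>e. f e y \<partial>D)"
    and gam: "\<gamma> > 0"
    and x_rv: "\<And>j. x j \<in> borel_measurable M"
    and phi_rv: "\<And>j. \<phi> j \<in> borel_measurable M"
    and h_rv: "\<And>j. h j \<in> borel_measurable M"
    and xi_rv: "\<And>j. \<xi> j \<in> measurable M D"
    and xi_distr: "\<And>j. distr M D (\<xi> j) = D"
    and xi_indep: "\<And>j. prob_space.indep_set M (var_events M D (\<xi> j)) (past_events M D x \<phi> \<xi> j)"
    and x_init: "\<And>\<omega>. \<omega> \<in> space M \<Longrightarrow> x 0 \<omega> = x0"
    and phi_init: "\<And>\<omega>. \<omega> \<in> space M \<Longrightarrow> \<phi> 0 \<omega> = \<phi>0"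
    and h_form: "\<And>j. \<exists>H. \<forall>\<omega>\<in>space M. h j \<omega> = H (x j \<omega>) (\<phi> j \<omega>) (\<xi> j \<omega>)"
    and x_step: "\<And>j \<omega>. \<omega> \<in> space M \<Longrightarrow>
                   x (Suc j) \<omega> = prox \<gamma> (f (\<xi> j \<omega>)) (x j \<omega> + \<gamma> *\<^sub>R h j \<omega>)"
    and sig_nonneg: "\<And>p. \<sigma>sq p \<ge> 0"
    and cst: "A1 \<ge> 0" "B1 \<ge> 0" "C1 \<ge> 0" "A2 \<ge> 0" "B2 \<ge> 0" "C2 \<ge> 0" "B2 < 1"
    and h_int: "\<And>j. integrable M (h j)"
    and cond_i: "\<And>j b. b \<in> Basis \<Longrightarrow>
        AE \<omega> in M. real_cond_exp M (gen_alg M (\<lambda>\<omega>. (x j \<omega>, \<phi> j \<omega>))) (\<lambda>\<omega>. h j \<omega> \<bullet> b) \<omega> = 0"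
    and cond_ii: "\<And>j. AE \<omega> in M.
        nn_cond_exp M (gen_alg M (\<lambda>\<omega>. (x j \<omega>, \<phi> j \<omega>)))
          (\<lambda>\<omega>. ennreal ((norm (h j \<omega> - gradf (\<xi> j \<omega>) xstar))\<^sup>2)) \<omega>
        \<le> ennreal (A1 * (norm (x j \<omega> - xstar))\<^sup>2 + B1 * \<sigma>sq (\<phi> j \<omega>) + C1)"
    and cond_iii: "\<And>j. AE \<omega> in M.
        nn_cond_exp M (gen_alg M (\<lambda>\<omega>. (x (Suc j) \<omega>, \<phi> j \<omega>)))
          (\<lambda>\<omega>. ennreal (\<sigma>sq (\<phi> (Suc j) \<omega>))) \<omega>
        \<le> ennreal (A2 * (norm (x (Suc j) \<omega> - xstar))\<^sup>2 + B2 * \<sigma>sq (\<phi> j \<omega>) + C2)"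
  shows "(\<integral>\<^sup>+\<omega>. ennreal ((norm (x (Suc k) \<omega> - xstar))\<^sup>2) \<partial>M)
      \<le> ennreal ((1 + \<gamma>\<^sup>2 * A1) / (1 + \<gamma> * \<mu>)\<^sup>2) * (\<integral>\<^sup>+\<omega>. ennreal ((norm (x k \<omega> - xstar))\<^sup>2) \<partial>M)
        + ennreal (\<gamma>\<^sup>2 * B1 / (1 + \<gamma> * \<mu>)\<^sup>2) * (\<integral>\<^sup>+\<omega>. ennreal (\<sigma>sq (\<phi> k \<omega>)) \<partial>M)
        + ennreal (\<gamma>\<^sup>2 * C1 / (1 + \<gamma> * \<mu>)\<^sup>2)"
proof -
  interpret prob_space M by (rule M)
  define F where "F = gen_alg M (\<lambda>\<omega>. (x k \<omega>, \<phi> k \<omega>))"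
  define G where "G \<omega> = gradf (\<xi> k \<omega>) xstar" for \<omega>
  define c where "c = 1 + \<gamma> * \<mu>"
  have c: "c > 0" using gam mu by (simp add: c_def add_pos_pos)
  have [measurable]: "\<xi> k \<in> measurable M D" "(\<lambda>e. gradf e xstar) \<in> borel_measurable D"
    "x k \<in> borel_measurable M" "\<phi> k \<in> borel_measurable M" "h k \<in> borel_measurable M"
    using xi_rv g_int[of xstar] x_rv phi_rv h_rv by auto
  then have [measurable]: "G \<in> borel_measurable M" unfolding G_def by measurable
  have F: "sigma_finite_subalgebra M F"
    unfolding F_def by (rule sigma_finite_subalgebra_gen_alg[OF M]) measurable
  have "(\<lambda>\<omega>. x k \<omega>) \<in> borel_measurable F"
    using measurable_gen_alg_fst[of "\<lambda>\<omega>. (x k \<omega>, \<phi> k \<omega>)" M] unfolding F_def by simp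
  then have YF: "(\<lambda>\<omega>. x k \<omega> - xstar) \<in> borel_measurable F" by simp
  have G: "integrable M G" "expectation G = 0"
    unfolding G_def
    by (rule gradient_sample_at_minimizer[where gf = gradf,
          OF xi_rv[of k] xi_distr[of k] g_int[of xstar] f_grad[of xstar] xstar])+
  have ind: "indep_var borel G borel (\<lambda>\<omega>. x k \<omega> - xstar)"
    unfolding G_def by (rule indep_var_sample_iterate[OF xi_rv x_rv xi_indep]) measurable
  have "c * norm (x (Suc k) \<omega> - xstar) \<le> norm ((x k \<omega> - xstar) + \<gamma> *\<^sub>R (h k \<omega> - G \<omega>))"
    if "\<omega> \<in> space M" for \<omega>
    using prox_contraction[OF sconv grad mu gam, where y = "x k \<omega> + \<gamma> *\<^sub>R h k \<omega>" and z = xstar]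
      x_step[OF that]
    by (simp add: c_def G_def algebra_simps)
  then have "(\<integral>\<^sup>+\<omega>. ennreal ((norm (x (Suc k) \<omega> - xstar))\<^sup>2) \<partial>M)
      \<le> ennreal (1 / c\<^sup>2) * (\<integral>\<^sup>+\<omega>. ennreal ((norm ((x k \<omega> - xstar) + \<gamma> *\<^sub>R (h k \<omega> - G \<omega>)))\<^sup>2) \<partial>M)"
    by (intro nn_integral_sq_norm_le_of_scaled_le c) measurable
  also have "\<dots> \<le> ennreal (1 / c\<^sup>2) * (ennreal (1 + \<gamma>\<^sup>2 * A1) * (\<integral>\<^sup>+\<omega>. ennreal ((norm (x k \<omega> - xstar))\<^sup>2) \<partial>M)
        + ennreal (\<gamma>\<^sup>2 * B1) * (\<integral>\<^sup>+\<omega>. ennreal (\<sigma>sq (\<phi> k \<omega>)) \<partial>M) + ennreal (\<gamma>\<^sup>2 * C1))"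
    using cond_i[of _ k, folded F_def] cond_ii[of k, folded F_def G_def] cst sig_nonneg
    by (intro mult_left_mono prob_space.expected_sq_norm_step_le[OF M F YF _ _ G ind]) auto
  also have "\<dots> = ennreal ((1 + \<gamma>\<^sup>2 * A1) / (1 + \<gamma> * \<mu>)\<^sup>2) * (\<integral>\<^sup>+\<omega>. ennreal ((norm (x k \<omega> - xstar))\<^sup>2) \<partial>M)
        + ennreal (\<gamma>\<^sup>2 * B1 / (1 + \<gamma> * \<mu>)\<^sup>2) * (\<integral>\<^sup>+\<omega>. ennreal (\<sigma>sq (\<phi> k \<omega>)) \<partial>M)
        + ennreal (\<gamma>\<^sup>2 * C1 / (1 + \<gamma> * \<mu>)\<^sup>2)"
    unfolding c_def by (rule ennreal_divide_affine) (use cst in auto)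
  finally show ?thesis .
qed

end
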